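(* Let $n\ge1$ and $x_k=-\cos\frac{k\pi}{n}$, $k=0,\dots,n$. Assign to each node a base point $b$ and offset $u_k=x_k-b$ as follows: if $x_k\in[-1,-\tfrac12)$ then $b=-1$; if $x_k\in[-\tfrac12,\tfrac12]$ then $b=0$; if $x_k\in(\tfrac12,1]$ then $b=1$. Given reals $\theta_0,\dots,\theta_n$, let $\hat u_k=u_k(1+\theta_k)$ and $\tilde x_k=b+\hat u_k$ (with $b$ the base point of $x_k$). Then for every $k\in\{0,\dots,n\}$, \[ \sum_{j\neq k}|r_{jk}(\mathbf{x},\tilde{\mathbf{x}})|\le\|\theta\|_\infty\bigl(3.2+2.3\,n+4.3\,n\log(n+1)\bigr). \]
   Context: $r_{jk}(\mathbf{x},\tilde{\mathbf{x}}):=\dfrac{\tilde x_k-\tilde x_j}{x_k-x_j}-1$ for $j\neq k$; $\|\theta\|_\infty=\max_k|\theta_k|$; $\log$ is the natural logarithm. *)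

theory Defs
  imports Complex_Main
begin

definition cheb_node :: "nat \<Rightarrow> nat \<Rightarrow> real" where
  "cheb_node n k = - cos (real k * pi / real n)"

definition base_point :: "real \<Rightarrow> real" where
  "base_point x = (if x < -1/2 then -1 else if x \<le> 1/2 then 0 else 1)"

definition offset :: "real \<Rightarrow> real" where
  "offset x = x - base_point x"

definition perturbed_node :: "real \<Rightarrow> real \<Rightarrow> real" where
  "perturbed_node x th = base_point x + offset x * (1 + th)"

definition r_ratio :: "(nat \<Rightarrow> real) \<Rightarrow> (nat \<Rightarrow> real) \<Rightarrow> nat \<Rightarrow> nat \<Rightarrow> real" where
  "r_ratio x xt j k = (xt k - xt j) / (x k - x j) - 1"

definition sup_norm :: "nat \<Rightarrow> (nat \<Rightarrow> real) \<Rightarrow> real" where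
  "sup_norm n \<theta> = Max ((\<lambda>k. \<bar>\<theta> k\<bar>) ` {0..n})"

end

theory Submission
  imports Defs "HOL-Analysis.Analysis"
begin

text \<open>Writing \<open>x\<^sub>k = - cos a\<^sub>k\<close> with \<open>a\<^sub>k = k\<pi>/n\<close>, the error ratio is
  \<open>r\<^sub>j\<^sub>k = (u\<^sub>k\<theta>\<^sub>k - u\<^sub>j\<theta>\<^sub>j)/(x\<^sub>k - x\<^sub>j)\<close>, so it suffices to bound \<open>(|u\<^sub>k| + |u\<^sub>j|)/|x\<^sub>k - x\<^sub>j|\<close>.
  The base points are chosen so that \<open>|u| \<le> 2/3 (1 - x\<^sup>2) = 2/3 sin\<^sup>2 a\<close>; the sum-to-product
  formulas then give \<open>(|u\<^sub>k| + |u\<^sub>j|)/|x\<^sub>k - x\<^sub>j| \<le> 4/|a\<^sub>k - a\<^sub>j| \<le> 4n/(3|k - j|)\<close>, and summing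
  over \<open>j\<close> produces two harmonic sums, each at most \<open>1 + ln (n + 1)\<close>.\<close>

lemma abs_sin_ge_third:
  fixes d :: real
  assumes "\<bar>d\<bar> \<le> pi / 2"
  shows "\<bar>d\<bar> / 3 \<le> \<bar>sin d\<bar>"
proof -
  have nonneg: "t / 3 \<le> sin t" if "0 \<le> t" "t \<le> pi / 2" for t :: real
  proof -
    have "\<bar>sin t - (\<Sum>m<3. sin_coeff m * t ^ m)\<bar> \<le> inverse (fact 3) * \<bar>t\<bar> ^ 3"
      by (rule Maclaurin_sin_bound)
    then have "\<bar>sin t - t\<bar> \<le> t ^ 3 / 6"
      using that by (simp add: eval_nat_numeral sin_coeff_def fact_numeral)
    then have "t - t ^ 3 / 6 \<le> sin t"
      by linarith
    moreover have "t * t \<le> 2 * 2"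
      using that pi_less_4 by (intro mult_mono) auto
    then have "t ^ 3 \<le> 4 * t"
      using that by (simp add: power3_eq_cube mult_right_mono)
    ultimately show ?thesis by linarith
  qed
  show ?thesis
  proof (cases "d \<ge> 0")
    case True
    then show ?thesis using nonneg[of d] assms by simp
  next
    case False
    then show ?thesis using nonneg[of "- d"] assms by simp
  qed
qed

lemma abs_offset_le:
  fixes x :: real
  assumes "\<bar>x\<bar> \<le> 1"
  shows "\<bar>offset x\<bar> \<le> 2/3 * (1 - x\<^sup>2)"
proof -
  consider "x < -1/2" | "-1/2 \<le> x" "x \<le> 1/2" | "x > 1/2" by linarith
  then show ?thesis
  proof cases
    case 1
    have "(1 + x) * 3 \<le> (1 + x) * (2 - 2 * x)"
      using 1 assms by (intro mult_left_mono) auto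
    then show ?thesis
      using 1 assms by (simp add: offset_def base_point_def algebra_simps power2_eq_square)
  next
    case 2
    have "\<bar>x\<bar> * \<bar>x\<bar> \<le> 1/2 * (1/2)"
      using 2 by (intro mult_mono) auto
    then show ?thesis
      using 2 by (simp add: offset_def base_point_def power2_eq_square)
  next
    case 3
    have "(1 - x) * 3 \<le> (1 - x) * (2 + 2 * x)"
      using 3 assms by (intro mult_left_mono) auto
    then show ?thesis
      using 3 assms by (simp add: offset_def base_point_def algebra_simps power2_eq_square)
  qed
qed

lemma abs_offset_neg_cos_le:
  fixes a :: real
  assumes "0 \<le> a" "a \<le> pi"
  shows "\<bar>offset (- cos a)\<bar> \<le> 2/3 * sin a"
proof -
  have "\<bar>offset (- cos a)\<bar> \<le> 2/3 * (sin a)\<^sup>2"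
    using abs_offset_le[of "- cos a"] by (simp add: sin_squared_eq)
  also have "(sin a)\<^sup>2 \<le> sin a"
    using sin_ge_zero[OF assms] by (simp add: power2_eq_square mult_left_le_one_le)
  finally show ?thesis by simp
qed

lemma offset_neg_cos_sum_le:
  fixes a c :: real
  assumes "0 \<le> a" "a \<le> pi" "0 \<le> c" "c \<le> pi"
  shows "\<bar>a - c\<bar> * (\<bar>offset (- cos a)\<bar> + \<bar>offset (- cos c)\<bar>) \<le> 4 * \<bar>cos a - cos c\<bar>"
proof -
  define s where "s = (a + c) / 2"
  define d where "d = (c - a) / 2"
  have sin_s: "sin s \<ge> 0"
    using assms by (simp add: s_def sin_ge_zero)
  have dist: "\<bar>cos a - cos c\<bar> = 2 * sin s * \<bar>sin d\<bar>"
    using cos_diff_cos[of a c] sin_s by (simp add: s_def d_def abs_mult)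
  have "sin a + sin c = 2 * sin s * cos ((a - c) / 2)"
    unfolding s_def by (rule sin_plus_sin)
  also have "\<dots> \<le> 2 * sin s"
    using sin_s by (simp add: mult_left_le)
  finally have "\<bar>offset (- cos a)\<bar> + \<bar>offset (- cos c)\<bar> \<le> 4/3 * sin s"
    using abs_offset_neg_cos_le[of a] abs_offset_neg_cos_le[of c] assms by linarith
  moreover have "\<bar>d\<bar> \<le> pi / 2"
    using assms by (auto simp: d_def abs_le_iff)
  then have "\<bar>a - c\<bar> \<le> 6 * \<bar>sin d\<bar>"
    using abs_sin_ge_third[of d] by (simp add: d_def abs_minus_commute)
  ultimately have "\<bar>a - c\<bar> * (\<bar>offset (- cos a)\<bar> + \<bar>offset (- cos c)\<bar>) \<le> 6 * \<bar>sin d\<bar> * (4/3 * sin s)"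
    by (intro mult_mono) auto
  then show ?thesis
    unfolding dist by (simp add: algebra_simps)
qed

lemma cheb_node_offset_sum_le:
  assumes "n \<ge> 1" "j \<le> n" "k \<le> n"
  shows "\<bar>real k - real j\<bar> * (\<bar>offset (cheb_node n k)\<bar> + \<bar>offset (cheb_node n j)\<bar>)
           \<le> 4/3 * real n * \<bar>cheb_node n k - cheb_node n j\<bar>"
proof -
  define a where "a = real k * pi / real n"
  define c where "c = real j * pi / real n"
  define U where "U = \<bar>offset (cheb_node n k)\<bar> + \<bar>offset (cheb_node n j)\<bar>"
  define D where "D = \<bar>cheb_node n k - cheb_node n j\<bar>"
  have n: "real n > 0" using assms by simp
  have "0 \<le> a" "a \<le> pi" "0 \<le> c" "c \<le> pi"
    using assms n by (auto simp: a_def c_def field_simps)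
  then have "\<bar>a - c\<bar> * U \<le> 4 * D"
    using offset_neg_cos_sum_le[of a c] by (simp add: U_def D_def cheb_node_def a_def c_def abs_minus_commute)
  moreover have "\<bar>a - c\<bar> = \<bar>real k - real j\<bar> * pi / real n"
    using n by (simp add: a_def c_def abs_mult flip: diff_divide_distrib left_diff_distrib)
  ultimately have "\<bar>real k - real j\<bar> * U * pi \<le> 4 * real n * D"
    using n by (simp add: field_simps)
  moreover have "\<bar>real k - real j\<bar> * U * 3 \<le> \<bar>real k - real j\<bar> * U * pi"
    using pi_gt3 by (intro mult_left_mono) (auto simp: U_def)
  ultimately show ?thesis
    unfolding U_def D_def by linarith
qed

lemma cheb_node_inj:
  assumes "n \<ge> 1" "j \<le> n" "k \<le> n" "j \<noteq> k"
  shows "cheb_node n k \<noteq> cheb_node n j"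
proof
  define a where "a = real k * pi / real n"
  define c where "c = real j * pi / real n"
  assume "cheb_node n k = cheb_node n j"
  then have "cos a = cos c"
    by (simp add: cheb_node_def a_def c_def)
  moreover have "0 \<le> a" "a \<le> pi" "0 \<le> c" "c \<le> pi"
    using assms by (auto simp: a_def c_def field_simps)
  ultimately have "a = c"
    using cos_inj_pi by blast
  then show False
    using assms by (simp add: a_def c_def)
qed

lemma r_ratio_perturbed_node:
  assumes "x k \<noteq> x j"
  shows "r_ratio x (\<lambda>i. perturbed_node (x i) (\<theta> i)) j k
           = (offset (x k) * \<theta> k - offset (x j) * \<theta> j) / (x k - x j)"
  using assms by (simp add: r_ratio_def perturbed_node_def offset_def field_simps)

lemma abs_le_sup_norm:
  assumes "i \<le> n"
  shows "\<bar>\<theta> i\<bar> \<le> sup_norm n \<theta>"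
  unfolding sup_norm_def using assms by (intro Max_ge) auto

lemma abs_r_ratio_cheb_le:
  assumes "n \<ge> 1" "j \<le> n" "k \<le> n" "j \<noteq> k"
  shows "\<bar>r_ratio (cheb_node n) (\<lambda>i. perturbed_node (cheb_node n i) (\<theta> i)) j k\<bar>
           \<le> sup_norm n \<theta> * (4/3 * real n) * (1 / \<bar>real k - real j\<bar>)"
proof -
  define M where "M = sup_norm n \<theta>"
  define uk where "uk = offset (cheb_node n k)"
  define uj where "uj = offset (cheb_node n j)"
  define D where "D = \<bar>cheb_node n k - cheb_node n j\<bar>"
  have D: "D > 0"
    using cheb_node_inj[OF assms] by (simp add: D_def)
  have kj: "\<bar>real k - real j\<bar> > 0"
    using assms by simp
  have M: "\<bar>\<theta> k\<bar> \<le> M" "\<bar>\<theta> j\<bar> \<le> M" "M \<ge> 0"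
    using abs_le_sup_norm[of k n \<theta>] abs_le_sup_norm[of j n \<theta>] assms by (auto simp: M_def)
  have "\<bar>uk * \<theta> k - uj * \<theta> j\<bar> \<le> \<bar>uk\<bar> * \<bar>\<theta> k\<bar> + \<bar>uj\<bar> * \<bar>\<theta> j\<bar>"
    using abs_triangle_ineq4[of "uk * \<theta> k" "uj * \<theta> j"] by (simp add: abs_mult)
  also have "\<dots> \<le> \<bar>uk\<bar> * M + \<bar>uj\<bar> * M"
    using M by (intro add_mono mult_left_mono) auto
  also have "\<dots> = M * (\<bar>uk\<bar> + \<bar>uj\<bar>)"
    by (simp add: algebra_simps)
  also have "\<dots> \<le> M * (4/3 * real n * D / \<bar>real k - real j\<bar>)"
    using cheb_node_offset_sum_le[OF assms(1-3)] kj M(3)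
    by (intro mult_left_mono) (auto simp: uk_def uj_def D_def field_simps)
  finally have "\<bar>uk * \<theta> k - uj * \<theta> j\<bar> / D \<le> M * (4/3 * real n) * (1 / \<bar>real k - real j\<bar>)"
    using D by (simp add: divide_le_eq field_simps)
  then show ?thesis
    using r_ratio_perturbed_node[OF cheb_node_inj[OF assms]]
    by (simp add: M_def uk_def uj_def D_def)
qed

lemma sum_inverse_dist_eq_harm:
  assumes "k \<le> n"
  shows "(\<Sum>j\<in>{0..n} - {k}. 1 / \<bar>real k - real j\<bar>) = harm k + (harm (n - k) :: real)"
proof -
  let ?g = "\<lambda>j. 1 / \<bar>real k - real j\<bar>"
  have below: "(\<Sum>j<k. ?g j) = harm k"
  proof -
    have "(\<Sum>j<k. ?g j) = (\<Sum>i<k. ?g (k - Suc i))"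
      by (rule sum.nat_diff_reindex[symmetric])
    also have "\<dots> = (\<Sum>i<k. inverse (of_nat (Suc i)))"
      by (intro sum.cong) (auto simp: divide_inverse)
    finally show ?thesis
      by (simp add: harm_altdef)
  qed
  have shift: "{Suc k..n} = (\<lambda>i. i + k) ` {1..n - k}"
    by (auto intro!: image_eqI[of _ _ "_ - k"])
  have above: "(\<Sum>j\<in>{Suc k..n}. ?g j) = harm (n - k)"
    unfolding shift by (subst sum.reindex) (auto simp: harm_def divide_inverse)
  have split: "{0..n} - {k} = {..<k} \<union> {Suc k..n}"
    using assms by auto
  have "(\<Sum>j\<in>{0..n} - {k}. ?g j) = (\<Sum>j<k. ?g j) + (\<Sum>j\<in>{Suc k..n}. ?g j)"
    unfolding split by (rule sum.union_disjoint) auto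
  then show ?thesis
    by (simp only: below above)
qed

lemma harm_le_one_plus_ln: "(harm n :: real) \<le> 1 + ln (real n + 1)"
proof (cases "n = 0")
  case False
  \<comment> \<open>\<open>harm n - ln n\<close> decreases and equals \<open>1\<close> at \<open>n = 1\<close>\<close>
  then have "harm n - ln (real n) \<le> 1"
    using euler_mascheroni_sequence_decreasing[of 1 n] by (simp add: harm_def)
  moreover have "ln (real n) \<le> ln (real n + 1)"
    using False by simp
  ultimately show ?thesis by linarith
qed (simp add: harm_def)

lemma sum_inverse_dist_le_ln:
  assumes "k \<le> n"
  shows "(\<Sum>j\<in>{0..n} - {k}. 1 / \<bar>real k - real j\<bar>) \<le> 2 * (1 + ln (real n + 1))"
proof -
  have "harm k + harm (n - k) \<le> 2 * (harm n :: real)"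
    using harm_mono[of k n, where 'a = real] harm_mono[of "n - k" n, where 'a = real] assms
    by simp
  then show ?thesis
    using sum_inverse_dist_eq_harm[OF assms] harm_le_one_plus_ln[of n] by simp
qed

theorem theorem4:
  fixes n :: nat and \<theta> :: "nat \<Rightarrow> real" and k :: nat
  assumes "n \<ge> 1" and "k \<le> n"
  shows "(\<Sum>j\<in>{0..n} - {k}.
            \<bar>r_ratio (cheb_node n) (\<lambda>i. perturbed_node (cheb_node n i) (\<theta> i)) j k\<bar>)
         \<le> sup_norm n \<theta> * (3.2 + 2.3 * real n + 4.3 * real n * ln (real n + 1))"
proof -
  define M where "M = sup_norm n \<theta>"
  define L where "L = ln (real n + 1)"
  have M: "M \<ge> 0"
    using abs_le_sup_norm[of 0 n \<theta>] by (simp add: M_def)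
  have "ln 2 \<le> L"
    using assms(1) by (simp add: L_def)
  then have L: "real n * (2/3) \<le> real n * L"
    using ln2_ge_two_thirds by (intro mult_left_mono) auto
  have "(\<Sum>j\<in>{0..n} - {k}.
            \<bar>r_ratio (cheb_node n) (\<lambda>i. perturbed_node (cheb_node n i) (\<theta> i)) j k\<bar>)
        \<le> (\<Sum>j\<in>{0..n} - {k}. M * (4/3 * real n) * (1 / \<bar>real k - real j\<bar>))"
    using abs_r_ratio_cheb_le[OF assms(1) _ assms(2)] by (intro sum_mono) (auto simp: M_def)
  also have "\<dots> = M * (4/3 * real n) * (\<Sum>j\<in>{0..n} - {k}. 1 / \<bar>real k - real j\<bar>)"
    by (simp only: sum_distrib_left)
  also have "\<dots> \<le> M * (4/3 * real n) * (2 * (1 + L))"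
    using M sum_inverse_dist_le_ln[OF assms(2)] by (intro mult_left_mono) (auto simp: L_def)
  also have "\<dots> \<le> M * (3.2 + 2.3 * real n + 4.3 * real n * L)"
    unfolding mult.assoc using M L by (intro mult_left_mono) (auto simp: algebra_simps)
  finally show ?thesis
    by (simp only: M_def L_def)
qed

end
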